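(* Let $G\in\Gamma_0(\mathbb{R}_+)$ and let $H=H_G$ be its marginal perspective function; assume $H$ is finite on $[0,\infty)^2$ and $H(u,1)>0$ for all $u\in[0,1)$. Let $a\in(0,1]$. If the function $$h(u):=\frac{(1-u^a)^{1/a}}{H(u,1)}$$ is decreasing on $[0,1)$, then $H^a$ satisfies the triangle inequality on $[0,+\infty)$, i.e. $H^a(x,z)\le H^a(x,y)+H^a(y,z)$ for all $x,y,z\ge 0$.
   Context: $\Gamma_0(\mathbb{R}_+)$ is the set of functions $F:[0,\infty)\to[0,\infty]$ that are convex, lower semicontinuous, with $F(1)=0$. For $F\in\Gamma_0(\mathbb{R}_+)$: the recession function is $\mathrm{rec}(F)(r)=\lim_{\alpha\to\infty}F(1+\alpha r)/\alpha$; the perspective function is $\hat F(r,t)=tF(r/t)$ for $t>0$ and $\hat F(r,0)=\mathrm{rec}(F)(r)$. The marginal perspective function $H_F:[0,\infty)^2\to[0,\infty]$ is the lower semicontinuous envelope of $\tilde H_F(r_1,r_2)=\inf_{\theta>0}[\hat F(\theta,r_1)+\hat F(\theta,r_2)]$; it is symmetric, jointly convex, positively $1$-homogeneous and vanishes on the diagonal. "Decreasing" means non-increasing. *)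

theory Defs
  imports "HOL-Analysis.Analysis" "HOL-Library.Extended_Nonnegative_Real"
begin

text \<open>Functions F : [0,\<infinity>) \<rightarrow> [0,\<infinity>] are modelled as real \<Rightarrow> ennreal; only the values on
  [0,\<infinity>) matter.\<close>

definition convex_on_nonneg :: "(real \<Rightarrow> ennreal) \<Rightarrow> bool" where
  "convex_on_nonneg F \<longleftrightarrow>
     (\<forall>x\<ge>0. \<forall>y\<ge>0. \<forall>t\<in>{0..1}.
        F ((1 - t) * x + t * y) \<le> ennreal (1 - t) * F x + ennreal t * F y)"

definition lsc_within :: "'a::topological_space set \<Rightarrow> ('a \<Rightarrow> ennreal) \<Rightarrow> bool" where
  "lsc_within D g \<longleftrightarrow> (\<forall>p\<in>D. g p \<le> Liminf (at p within D) g)"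

definition Gamma0 :: "(real \<Rightarrow> ennreal) set" where
  "Gamma0 = {F. convex_on_nonneg F \<and> lsc_within {0..} F \<and> F 1 = 0}"

definition recession :: "(real \<Rightarrow> ennreal) \<Rightarrow> real \<Rightarrow> ennreal" where
  "recession F r = Lim at_top (\<lambda>\<alpha>::real. F (1 + \<alpha> * r) / ennreal \<alpha>)"

definition perspective :: "(real \<Rightarrow> ennreal) \<Rightarrow> real \<Rightarrow> real \<Rightarrow> ennreal" where
  "perspective F r t = (if t > 0 then ennreal t * F (r / t) else recession F r)"

definition marg_persp_pre :: "(real \<Rightarrow> ennreal) \<Rightarrow> real \<times> real \<Rightarrow> ennreal" where
  "marg_persp_pre F p =
     (INF \<theta>\<in>{0<..}. perspective F \<theta> (fst p) + perspective F \<theta> (snd p))"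

definition quadrant :: "(real \<times> real) set" where
  "quadrant = {0..} \<times> {0..}"

definition marg_persp :: "(real \<Rightarrow> ennreal) \<Rightarrow> real \<Rightarrow> real \<Rightarrow> ennreal" where
  "marg_persp F r1 r2 =
     (SUP g\<in>{g. lsc_within quadrant g \<and> (\<forall>q\<in>quadrant. g q \<le> marg_persp_pre F q)}. g (r1, r2))"

end

theory Submission
  imports Defs
begin

text \<open>The marginal perspective function \<open>H\<close> is the lower semicontinuous envelope of its
  pre-envelope, and an inequality \<open>k * f (T q) \<le> f q\<close> along a continuous self-map \<open>T\<close> of the
  quadrant passes from a function to its envelope. Applied to the swap, to dilations and to the maps
  \<open>(r\<^sub>1, r\<^sub>2) \<mapsto> ((1 - l) r\<^sub>1 + l r\<^sub>2, r\<^sub>2)\<close>, for which convexity of the perspective provides the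
  pre-envelope inequality, this shows that \<open>H\<close> is symmetric, positively homogeneous and that
  \<open>H(\<cdot>, 1)\<close> is nonincreasing on \<open>[0, 1]\<close>. By homogeneity and symmetry the triangle inequality
  for \<open>H\<^sup>a\<close> reduces to \<open>H(x,1)\<^sup>a \<le> H(x,y)\<^sup>a + H(y,1)\<^sup>a\<close> for \<open>0 \<le> x \<le> 1\<close>. Monotonicity settles this
  unless \<open>x < y < 1\<close>; there the decrease of \<open>h\<close>, raised to the power \<open>a\<close>, gives
  \<open>H(x,1)\<^sup>a (1 - v\<^sup>a) \<le> H(v,1)\<^sup>a (1 - x\<^sup>a)\<close> for \<open>x \<le> v < 1\<close>.\<close>

section \<open>Lower semicontinuous envelopes\<close>

definition lsc_envelope :: "'a::topological_space set \<Rightarrow> ('a \<Rightarrow> ennreal) \<Rightarrow> 'a \<Rightarrow> ennreal" where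
  "lsc_envelope D f p = (SUP g\<in>{g. lsc_within D g \<and> (\<forall>q\<in>D. g q \<le> f q)}. g p)"

lemma marg_persp_eq_lsc_envelope:
  "marg_persp F r1 r2 = lsc_envelope quadrant (marg_persp_pre F) (r1, r2)"
  by (simp add: marg_persp_def lsc_envelope_def)

lemma lsc_within_iff_eventually:
  "lsc_within D g \<longleftrightarrow> (\<forall>p\<in>D. \<forall>y < g p. eventually (\<lambda>x. y < g x) (at p within D))"
  by (simp add: lsc_within_def le_Liminf_iff)

lemma lsc_envelope_le: "q \<in> D \<Longrightarrow> lsc_envelope D f q \<le> f q"
  unfolding lsc_envelope_def by (rule SUP_least) auto

lemma le_lsc_envelope:
  "lsc_within D g \<Longrightarrow> (\<And>q. q \<in> D \<Longrightarrow> g q \<le> f q) \<Longrightarrow> g p \<le> lsc_envelope D f p"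
  unfolding lsc_envelope_def by (rule SUP_upper) auto

lemma lsc_within_lsc_envelope: "lsc_within D (lsc_envelope D f)"
  unfolding lsc_within_iff_eventually
proof (intro ballI allI impI)
  fix p y assume p: "p \<in> D" and "y < lsc_envelope D f p"
  then obtain g where g: "lsc_within D g" "\<forall>q\<in>D. g q \<le> f q" and "y < g p"
    unfolding lsc_envelope_def by (auto simp: less_SUP_iff)
  with p have "eventually (\<lambda>x. y < g x) (at p within D)"
    by (auto simp: lsc_within_iff_eventually)
  then show "eventually (\<lambda>x. y < lsc_envelope D f x) (at p within D)"
    by eventually_elim (use le_lsc_envelope[OF g(1)] g(2) in \<open>blast intro: less_le_trans\<close>)
qed

lemma lsc_within_compose:
  assumes f: "lsc_within E f" and T: "continuous_on D T" "T ` D \<subseteq> E"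
  shows "lsc_within D (\<lambda>x. f (T x))"
  unfolding lsc_within_iff_eventually
proof (intro ballI allI impI)
  fix p y assume p: "p \<in> D" and y: "y < f (T p)"
  then have "eventually (\<lambda>x. y < f x) (at (T p) within E)"
    using f T by (auto simp: lsc_within_iff_eventually)
  then have "eventually (\<lambda>x. x \<in> E \<longrightarrow> y < f x) (nhds (T p))"
    unfolding eventually_at_filter by eventually_elim (use y in auto)
  moreover have "filterlim T (nhds (T p)) (at p within D)"
    using T(1) p by (auto simp: continuous_on_def)
  ultimately have "eventually (\<lambda>x. T x \<in> E \<longrightarrow> y < f (T x)) (at p within D)"
    by (rule eventually_compose_filterlim)
  moreover have "eventually (\<lambda>x. x \<in> D) (at p within D)"
    by (simp add: eventually_at_filter)
  ultimately show "eventually (\<lambda>x. y < f (T x)) (at p within D)"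
    by eventually_elim (use T(2) in auto)
qed

lemma lsc_within_cmult:
  assumes f: "lsc_within D f" and k: "0 < k"
  shows "lsc_within D (\<lambda>x. ennreal k * f x)"
  unfolding lsc_within_iff_eventually
proof (intro ballI allI impI)
  fix p y assume p: "p \<in> D" and "y < ennreal k * f p"
  then have "y / ennreal k < f p"
    using k by (simp add: divide_less_ennreal mult.commute)
  with f p have "eventually (\<lambda>x. y / ennreal k < f x) (at p within D)"
    by (auto simp: lsc_within_iff_eventually)
  then show "eventually (\<lambda>x. y < ennreal k * f x) (at p within D)"
    by eventually_elim (use k in \<open>simp add: divide_less_ennreal mult.commute\<close>)
qed

lemma lsc_envelope_transfer:
  assumes T: "continuous_on D T" "T ` D \<subseteq> D" and k: "0 < k"
    and f: "\<And>q. q \<in> D \<Longrightarrow> ennreal k * f (T q) \<le> f q"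
  shows "ennreal k * lsc_envelope D f (T q) \<le> lsc_envelope D f q"
proof (rule le_lsc_envelope)
  show "lsc_within D (\<lambda>q. ennreal k * lsc_envelope D f (T q))"
    using lsc_within_compose[OF lsc_within_lsc_envelope T] k by (rule lsc_within_cmult)
  fix q assume q: "q \<in> D"
  then have "ennreal k * lsc_envelope D f (T q) \<le> ennreal k * f (T q)"
    using T by (intro mult_left_mono lsc_envelope_le) auto
  also have "\<dots> \<le> f q" using f q .
  finally show "ennreal k * lsc_envelope D f (T q) \<le> f q" .
qed

section \<open>Recession function and perspective\<close>

lemma ennreal_divide_eq_mult_inverse: "0 < \<alpha> \<Longrightarrow> X / ennreal \<alpha> = X * ennreal (1 / \<alpha>)"
  by (simp add: divide_ennreal_def inverse_ennreal inverse_eq_divide)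

lemma ennreal_divide_rescale:
  assumes "0 < \<alpha>" "0 < c"
  shows "X / ennreal \<alpha> = ennreal c * (X / ennreal (\<alpha> * c))"
proof -
  have "ennreal c * ennreal (1 / (\<alpha> * c)) = ennreal (1 / \<alpha>)"
    using assms by (simp add: ennreal_mult[symmetric])
  then show ?thesis
    using assms by (simp add: ennreal_divide_eq_mult_inverse mult.left_commute)
qed

lemma convex_on_nonnegD:
  "convex_on_nonneg F \<Longrightarrow> 0 \<le> x \<Longrightarrow> 0 \<le> y \<Longrightarrow> 0 \<le> t \<Longrightarrow> t \<le> 1 \<Longrightarrow>
    F ((1 - t) * x + t * y) \<le> ennreal (1 - t) * F x + ennreal t * F y"
  unfolding convex_on_nonneg_def by auto

context
  fixes F :: "real \<Rightarrow> ennreal"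
  assumes convex: "convex_on_nonneg F" and F1: "F 1 = 0"
begin

lemma le_toward_one: "0 \<le> y \<Longrightarrow> 0 \<le> t \<Longrightarrow> t \<le> 1 \<Longrightarrow> F ((1 - t) + t * y) \<le> ennreal t * F y"
  using convex_on_nonnegD[OF convex, of 1 y t] F1 by simp

lemma recession_quotient_mono:
  assumes \<theta>: "0 \<le> \<theta>" and \<alpha>\<beta>: "0 < \<alpha>" "\<alpha> \<le> \<beta>"
  shows "F (1 + \<alpha> * \<theta>) / ennreal \<alpha> \<le> F (1 + \<beta> * \<theta>) / ennreal \<beta>"
proof -
  have eq: "(1 - \<alpha> / \<beta>) + \<alpha> / \<beta> * (1 + \<beta> * \<theta>) = 1 + \<alpha> * \<theta>"
    using \<alpha>\<beta> by (simp add: field_simps)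
  have "F ((1 - \<alpha> / \<beta>) + \<alpha> / \<beta> * (1 + \<beta> * \<theta>)) \<le> ennreal (\<alpha> / \<beta>) * F (1 + \<beta> * \<theta>)"
    using \<theta> \<alpha>\<beta> by (intro le_toward_one) auto
  then have "F (1 + \<alpha> * \<theta>) \<le> ennreal (\<alpha> / \<beta>) * F (1 + \<beta> * \<theta>)"
    unfolding eq .
  then have "F (1 + \<alpha> * \<theta>) * ennreal (1 / \<alpha>) \<le> ennreal (\<alpha> / \<beta>) * F (1 + \<beta> * \<theta>) * ennreal (1 / \<alpha>)"
    by (rule mult_right_mono) simp
  also have "\<dots> = F (1 + \<beta> * \<theta>) * (ennreal (\<alpha> / \<beta>) * ennreal (1 / \<alpha>))"
    by (simp only: ac_simps)
  also have "ennreal (\<alpha> / \<beta>) * ennreal (1 / \<alpha>) = ennreal (1 / \<beta>)"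
    using \<alpha>\<beta> by (simp add: ennreal_mult[symmetric])
  finally show ?thesis
    using \<alpha>\<beta> by (simp add: ennreal_divide_eq_mult_inverse)
qed

lemma recession_eq_SUP:
  assumes \<theta>: "0 \<le> \<theta>"
  shows "recession F \<theta> = (SUP \<alpha>\<in>{0<..}. F (1 + \<alpha> * \<theta>) / ennreal \<alpha>)"
    (is "_ = ?S")
proof -
  have "((\<lambda>\<alpha>. F (1 + \<alpha> * \<theta>) / ennreal \<alpha>) \<longlongrightarrow> ?S) at_top"
  proof (rule order_tendstoI)
    fix y assume "y < ?S"
    then obtain \<alpha>\<^sub>0 where \<alpha>\<^sub>0: "0 < \<alpha>\<^sub>0" "y < F (1 + \<alpha>\<^sub>0 * \<theta>) / ennreal \<alpha>\<^sub>0"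
      by (auto simp: less_SUP_iff)
    show "eventually (\<lambda>\<alpha>. y < F (1 + \<alpha> * \<theta>) / ennreal \<alpha>) at_top"
      using eventually_ge_at_top[of \<alpha>\<^sub>0]
      by eventually_elim (use \<alpha>\<^sub>0 recession_quotient_mono[OF \<theta>] in \<open>blast intro: less_le_trans\<close>)
  next
    fix y assume y: "?S < y"
    show "eventually (\<lambda>\<alpha>. F (1 + \<alpha> * \<theta>) / ennreal \<alpha> < y) at_top"
      using eventually_gt_at_top[of 0]
    proof eventually_elim
      case (elim \<alpha>)
      then have "F (1 + \<alpha> * \<theta>) / ennreal \<alpha> \<le> ?S" by (intro SUP_upper) simp
      then show ?case using y by (rule le_less_trans)
    qed
  qed
  then show ?thesis
    unfolding recession_def by (rule tendsto_Lim[rotated]) simp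
qed

lemma recession_quotient_le:
  "0 \<le> \<theta> \<Longrightarrow> 0 < \<alpha> \<Longrightarrow> F (1 + \<alpha> * \<theta>) / ennreal \<alpha> \<le> recession F \<theta>"
  unfolding recession_eq_SUP by (rule SUP_upper) simp

lemma recession_scale:
  assumes \<theta>: "0 \<le> \<theta>" and c: "0 < c"
  shows "recession F (c * \<theta>) \<le> ennreal c * recession F \<theta>"
  unfolding recession_eq_SUP[OF mult_nonneg_nonneg[OF less_imp_le[OF c] \<theta>]]
proof (rule SUP_least)
  fix \<alpha> :: real assume "\<alpha> \<in> {0<..}"
  then have \<alpha>: "0 < \<alpha>" by simp
  have "F (1 + \<alpha> * (c * \<theta>)) / ennreal \<alpha> = ennreal c * (F (1 + (\<alpha> * c) * \<theta>) / ennreal (\<alpha> * c))"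
    using \<alpha> c by (simp add: ennreal_divide_rescale[of \<alpha> c] ac_simps)
  also have "\<dots> \<le> ennreal c * recession F \<theta>"
    using \<alpha> c \<theta> by (intro mult_left_mono recession_quotient_le) auto
  finally show "F (1 + \<alpha> * (c * \<theta>)) / ennreal \<alpha> \<le> ennreal c * recession F \<theta>" .
qed

lemma perspective_scale:
  assumes "0 < \<theta>" "0 \<le> r" "0 < c"
  shows "perspective F (c * \<theta>) (c * r) \<le> ennreal c * perspective F \<theta> r"
proof (cases "r = 0")
  case True
  then show ?thesis using assms recession_scale[of \<theta> c] by (simp add: perspective_def)
next
  case False
  then show ?thesis using assms by (simp add: perspective_def ennreal_mult mult.assoc)
qed

text \<open>Convexity of the perspective along the segment from \<open>(\<theta>, t)\<close> to a diagonal point \<open>(d, d)\<close>,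
  where the perspective vanishes.\<close>
lemma perspective_toward_diagonal:
  assumes \<theta>: "0 < \<theta>" and t: "0 \<le> t" and d: "0 < d" and l: "0 < l" "l < 1"
  shows "perspective F ((1 - l) * \<theta> + l * d) ((1 - l) * t + l * d) \<le> ennreal (1 - l) * perspective F \<theta> t"
proof (cases "t = 0")
  case True
  define \<alpha> where "\<alpha> = (1 - l) / (l * d)"
  have \<alpha>: "0 < \<alpha>" using l d by (simp add: \<alpha>_def)
  have "((1 - l) * \<theta> + l * d) / (l * d) = 1 + \<alpha> * \<theta>"
    using l d by (simp add: \<alpha>_def add_divide_distrib)
  then have "perspective F ((1 - l) * \<theta> + l * d) ((1 - l) * t + l * d) = ennreal (l * d) * F (1 + \<alpha> * \<theta>)"
    using True l d by (simp add: perspective_def)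
  also have "ennreal (l * d) = ennreal (1 - l) * ennreal (1 / \<alpha>)"
    using l d by (simp add: ennreal_mult[symmetric] \<alpha>_def)
  also have "\<dots> * F (1 + \<alpha> * \<theta>) = ennreal (1 - l) * (F (1 + \<alpha> * \<theta>) / ennreal \<alpha>)"
    using \<alpha> by (simp add: ennreal_divide_eq_mult_inverse ac_simps)
  also have "\<dots> \<le> ennreal (1 - l) * perspective F \<theta> t"
    using True \<theta> \<alpha> by (auto simp: perspective_def intro!: mult_left_mono recession_quotient_le)
  finally show ?thesis .
next
  case False
  define s where "s = (1 - l) * t + l * d"
  define \<mu> where "\<mu> = (1 - l) * t / s"
  have s: "0 < s" using t l d by (simp add: s_def add_nonneg_pos)
  have "(1 - l) * t \<le> s" using l d by (simp add: s_def)
  then have \<mu>: "0 \<le> \<mu>" "\<mu> \<le> 1" using t l s by (auto simp: \<mu>_def)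
  have "1 - \<mu> = l * d / s" using s by (simp add: \<mu>_def s_def field_simps)
  moreover have "\<mu> * (\<theta> / t) = (1 - l) * \<theta> / s" using False by (simp add: \<mu>_def)
  ultimately have "((1 - l) * \<theta> + l * d) / s = (1 - \<mu>) + \<mu> * (\<theta> / t)"
    by (simp add: add_divide_distrib)
  then have "F (((1 - l) * \<theta> + l * d) / s) \<le> ennreal \<mu> * F (\<theta> / t)"
    using le_toward_one[of "\<theta> / t" \<mu>] \<theta> t \<mu> by simp
  then have "ennreal s * F (((1 - l) * \<theta> + l * d) / s) \<le> ennreal s * (ennreal \<mu> * F (\<theta> / t))"
    by (rule mult_left_mono) simp
  also have "\<dots> = ennreal (1 - l) * (ennreal t * F (\<theta> / t))"
    using s \<mu> l t by (simp add: mult.assoc[symmetric] ennreal_mult[symmetric] \<mu>_def)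
  finally show ?thesis
    using s False t by (simp add: perspective_def s_def)
qed

end

section \<open>Symmetry, homogeneity and monotonicity of the marginal perspective function\<close>

lemma marg_persp_pre_swap: "marg_persp_pre F (prod.swap q) = marg_persp_pre F q"
  by (simp add: marg_persp_pre_def add.commute)

lemma marg_persp_commute:
  assumes "0 \<le> x" "0 \<le> y"
  shows "marg_persp F x y = marg_persp F y x"
proof -
  have swap: "continuous_on quadrant prod.swap" "prod.swap ` quadrant \<subseteq> quadrant"
    by (auto intro: continuous_intros simp: quadrant_def)
  have "marg_persp F v u \<le> marg_persp F u v" if "0 \<le> u" "0 \<le> v" for u v
    using lsc_envelope_transfer[OF swap, of 1 "marg_persp_pre F" "(u, v)"] that
    by (simp add: marg_persp_eq_lsc_envelope marg_persp_pre_swap quadrant_def)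
  with assms show ?thesis by (blast intro: antisym)
qed

lemma marg_persp_diagonal:
  assumes F1: "F 1 = 0" and x: "0 < x"
  shows "marg_persp F x x = 0"
proof -
  have "marg_persp F x x \<le> marg_persp_pre F (x, x)"
    unfolding marg_persp_eq_lsc_envelope using x by (intro lsc_envelope_le) (simp add: quadrant_def)
  also have "\<dots> \<le> perspective F x x + perspective F x x"
    unfolding marg_persp_pre_def fst_conv snd_conv using x by (intro INF_lower) auto
  also have "\<dots> = 0" using x F1 by (simp add: perspective_def)
  finally show ?thesis by simp
qed

context
  fixes F :: "real \<Rightarrow> ennreal"
  assumes convex: "convex_on_nonneg F" and F1: "F 1 = 0"
begin

lemma marg_persp_pre_scale:
  assumes q: "q \<in> quadrant" and c: "0 < c"
  shows "ennreal (1 / c) * marg_persp_pre F (c *\<^sub>R q) \<le> marg_persp_pre F q"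
  unfolding marg_persp_pre_def[of F q]
proof (rule INF_greatest)
  fix \<theta> :: real assume "\<theta> \<in> {0<..}"
  then have \<theta>: "0 < \<theta>" by simp
  have "marg_persp_pre F (c *\<^sub>R q) \<le> perspective F (c * \<theta>) (c * fst q) + perspective F (c * \<theta>) (c * snd q)"
    unfolding marg_persp_pre_def fst_scaleR snd_scaleR real_scaleR_def using \<theta> c by (intro INF_lower) auto
  also have "\<dots> \<le> ennreal c * (perspective F \<theta> (fst q) + perspective F \<theta> (snd q))"
    using q \<theta> c by (auto simp: quadrant_def distrib_left intro!: add_mono perspective_scale[OF convex F1])
  finally have "ennreal (1 / c) * marg_persp_pre F (c *\<^sub>R q)
      \<le> ennreal (1 / c) * (ennreal c * (perspective F \<theta> (fst q) + perspective F \<theta> (snd q)))"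
    by (rule mult_left_mono) simp
  also have "\<dots> = ennreal (1 / c) * ennreal c * (perspective F \<theta> (fst q) + perspective F \<theta> (snd q))"
    by (simp only: mult.assoc)
  also have "ennreal (1 / c) * ennreal c = 1"
    using c by (simp add: ennreal_mult[symmetric])
  finally show "ennreal (1 / c) * marg_persp_pre F (c *\<^sub>R q) \<le> perspective F \<theta> (fst q) + perspective F \<theta> (snd q)"
    by simp
qed

lemma marg_persp_pre_contract:
  assumes r1: "0 \<le> r1" and r2: "0 \<le> r2" and l: "0 < l" "l < 1"
  shows "marg_persp_pre F ((1 - l) * r1 + l * r2, r2) \<le> marg_persp_pre F (r1, r2)"
proof (cases "r2 = 0")
  case True
  have "marg_persp_pre F ((1 - l) *\<^sub>R (r1, r2))
      \<le> ennreal (1 / (1 - l)) * marg_persp_pre F ((1 - l) *\<^sub>R (r1, r2))"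
    using l mult_right_mono[of 1 "ennreal (1 / (1 - l))"] by simp
  also have "\<dots> \<le> marg_persp_pre F (r1, r2)"
    using r1 r2 l by (intro marg_persp_pre_scale) (auto simp: quadrant_def)
  finally show ?thesis using True by simp
next
  case False
  then have r2: "0 < r2" using r2 by simp
  show ?thesis
    unfolding marg_persp_pre_def fst_conv snd_conv
  proof (rule INF_greatest)
    fix \<theta> :: real assume "\<theta> \<in> {0<..}"
    then have \<theta>: "0 < \<theta>" by simp
    define \<theta>' where "\<theta>' = (1 - l) * \<theta> + l * r2"
    have "0 < \<theta>'" using \<theta> l r2 by (simp add: \<theta>'_def add_pos_pos)
    then have "(INF \<theta>\<in>{0<..}. perspective F \<theta> ((1 - l) * r1 + l * r2) + perspective F \<theta> r2)
        \<le> perspective F \<theta>' ((1 - l) * r1 + l * r2) + perspective F \<theta>' r2"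
      by (intro INF_lower) auto
    also have "\<dots> \<le> ennreal (1 - l) * perspective F \<theta> r1 + ennreal (1 - l) * perspective F \<theta> r2"
    proof (rule add_mono)
      show "perspective F \<theta>' ((1 - l) * r1 + l * r2) \<le> ennreal (1 - l) * perspective F \<theta> r1"
        unfolding \<theta>'_def using \<theta> r1 r2 l by (rule perspective_toward_diagonal[OF convex F1])
      have "(1 - l) * r2 + l * r2 = r2" by (simp add: algebra_simps)
      then show "perspective F \<theta>' r2 \<le> ennreal (1 - l) * perspective F \<theta> r2"
        using perspective_toward_diagonal[OF convex F1 \<theta> less_imp_le[OF r2] r2 l] by (simp add: \<theta>'_def)
    qed
    also have "\<dots> \<le> perspective F \<theta> r1 + perspective F \<theta> r2"
      using l mult_right_mono[of "ennreal (1 - l)" 1] by (simp add: distrib_left[symmetric])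
    finally show "(INF \<theta>\<in>{0<..}. perspective F \<theta> ((1 - l) * r1 + l * r2) + perspective F \<theta> r2)
        \<le> perspective F \<theta> r1 + perspective F \<theta> r2" .
  qed
qed

lemma marg_persp_homogeneous:
  assumes c: "0 < c" and x: "0 \<le> x" and y: "0 \<le> y"
  shows "marg_persp F (c * x) (c * y) = ennreal c * marg_persp F x y"
proof -
  have rescale: "ennreal (1 / c) * marg_persp F (c * x) (c * y) \<le> marg_persp F x y"
    if "0 < c" "0 \<le> x" "0 \<le> y" for c x y
  proof -
    have "continuous_on quadrant (\<lambda>q. c *\<^sub>R q)" "(\<lambda>q. c *\<^sub>R q) ` quadrant \<subseteq> quadrant"
      using that by (auto intro: continuous_intros simp: quadrant_def)
    from lsc_envelope_transfer[OF this, of "1 / c" "marg_persp_pre F" "(x, y)"] that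
    show ?thesis by (simp add: marg_persp_eq_lsc_envelope marg_persp_pre_scale quadrant_def)
  qed
  have "marg_persp F (c * x) (c * y) = ennreal c * (ennreal (1 / c) * marg_persp F (c * x) (c * y))"
    using c by (simp add: mult.assoc[symmetric] ennreal_mult[symmetric])
  also have "\<dots> \<le> ennreal c * marg_persp F x y"
    using rescale[OF c x y] by (rule mult_left_mono) simp
  finally show ?thesis
    using rescale[of "1 / c" "c * x" "c * y"] c x y by (auto intro: antisym)
qed

lemma marg_persp_antimono:
  assumes y: "0 \<le> y" "y \<le> x" and r: "x < r"
  shows "marg_persp F x r \<le> marg_persp F y r"
proof (cases "x = y")
  case False
  define l where "l = (x - y) / (r - y)"
  have l: "0 < l" "l < 1" using y r False by (auto simp: l_def field_simps)
  have "l * (r - y) = x - y" using r y by (simp add: l_def)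
  then have x: "(1 - l) * y + l * r = x" by (simp add: algebra_simps)
  let ?T = "\<lambda>q. ((1 - l) * fst q + l * snd q, snd q)"
  have T: "continuous_on quadrant ?T" "?T ` quadrant \<subseteq> quadrant"
    using l by (auto intro!: continuous_intros simp: quadrant_def)
  have "ennreal 1 * marg_persp_pre F (?T q) \<le> marg_persp_pre F q" if "q \<in> quadrant" for q
    using that l by (cases q) (simp add: quadrant_def marg_persp_pre_contract)
  from lsc_envelope_transfer[where f = "marg_persp_pre F", OF T zero_less_one this, of "(y, r)"] y r
  show ?thesis by (simp add: marg_persp_eq_lsc_envelope quadrant_def x)
qed simp

end

section \<open>The triangle inequality for homogeneous profiles\<close>

lemma powr_cross_le_of_ratio_le:
  fixes a u v p q :: real
  assumes a: "0 < a" and u: "0 \<le> u" "u \<le> 1" and v: "0 \<le> v" "v \<le> 1"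
    and p: "0 < p" and q: "0 < q"
    and ratio: "(1 - v powr a) powr (1 / a) / q \<le> (1 - u powr a) powr (1 / a) / p"
  shows "p powr a * (1 - v powr a) \<le> q powr a * (1 - u powr a)"
proof -
  have inv_powr: "((1 - t powr a) powr (1 / a)) powr a = 1 - t powr a" if "0 \<le> t" "t \<le> 1" for t
    using that a powr_le1[of a t] by (simp add: powr_powr)
  have "(1 - v powr a) powr (1 / a) * p \<le> (1 - u powr a) powr (1 / a) * q"
    using ratio p q by (simp add: field_simps)
  then have "((1 - v powr a) powr (1 / a) * p) powr a \<le> ((1 - u powr a) powr (1 / a) * q) powr a"
    using a p by (intro powr_mono2) auto
  then show ?thesis
    using inv_powr[OF u] inv_powr[OF v] by (simp add: powr_mult mult.commute)
qed

locale homogeneous_profile =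
  fixes H :: "real \<Rightarrow> real \<Rightarrow> real" and a :: real
  assumes exponent: "0 < a" "a \<le> 1"
    and nonneg: "\<And>x y. 0 \<le> H x y"
    and symmetric: "\<And>x y. 0 \<le> x \<Longrightarrow> 0 \<le> y \<Longrightarrow> H x y = H y x"
    and homogeneous: "\<And>c x y. 0 < c \<Longrightarrow> 0 \<le> x \<Longrightarrow> 0 \<le> y \<Longrightarrow> H (c * x) (c * y) = c * H x y"
    and diagonal: "\<And>x. 0 < x \<Longrightarrow> H x x = 0"
    and antimono: "\<And>x y. 0 \<le> y \<Longrightarrow> y \<le> x \<Longrightarrow> x < 1 \<Longrightarrow> H x 1 \<le> H y 1"
    and positive: "\<And>u. 0 \<le> u \<Longrightarrow> u < 1 \<Longrightarrow> 0 < H u 1"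
    and ratio_decreasing: "\<And>u v. 0 \<le> u \<Longrightarrow> u \<le> v \<Longrightarrow> v < 1 \<Longrightarrow>
        (1 - v powr a) powr (1 / a) / H v 1 \<le> (1 - u powr a) powr (1 / a) / H u 1"
begin

lemma diagonal_nonneg: "0 \<le> x \<Longrightarrow> H x x = 0"
  using homogeneous[of 2 0 0] diagonal[of x] by (cases "x = 0") auto

lemma antimono_le_one: "0 \<le> y \<Longrightarrow> y \<le> x \<Longrightarrow> x \<le> 1 \<Longrightarrow> H x 1 \<le> H y 1"
  using antimono[of y x] diagonal[of 1] nonneg[of y 1] by (cases "x = 1") auto

lemma homogeneous_one: "0 < y \<Longrightarrow> 0 \<le> x \<Longrightarrow> H x y = y * H (x / y) 1"
  using homogeneous[of y "x / y" 1] by simp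

lemma profile_powr_cross_le:
  "0 \<le> u \<Longrightarrow> u \<le> v \<Longrightarrow> v < 1 \<Longrightarrow>
    H u 1 powr a * (1 - v powr a) \<le> H v 1 powr a * (1 - u powr a)"
  using exponent positive[of u] positive[of v] ratio_decreasing[of u v]
  by (intro powr_cross_le_of_ratio_le) auto

text \<open>Apply the cross inequality at \<open>v = y\<close> and at \<open>v = x / y\<close>; after scaling the second by
  \<open>y\<^sup>a\<close> the left-hand sides add up to \<open>H(x,1)\<^sup>a (1 - x\<^sup>a)\<close>.\<close>
lemma triangle_to_one_between:
  assumes x: "0 \<le> x" and xy: "x < y" and y: "y < 1"
  shows "H x 1 powr a \<le> H x y powr a + H y 1 powr a"
proof -
  define w where "w = x / y"
  have yp: "0 < y" using x xy by simp
  have w: "0 \<le> w" "x \<le> w" "w < 1"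
    using x xy y yp mult_left_le[of y x] by (auto simp: w_def field_simps)
  have Hxy: "H x y powr a = y powr a * H w 1 powr a"
    using homogeneous_one[OF yp x] yp nonneg by (simp add: w_def powr_mult)
  have xw: "y powr a * w powr a = x powr a"
    using x yp by (simp add: w_def powr_divide)
  have "H x 1 powr a * (y powr a - x powr a) = y powr a * (H x 1 powr a * (1 - w powr a))"
    using xw by (simp add: algebra_simps)
  also have "\<dots> \<le> y powr a * (H w 1 powr a * (1 - x powr a))"
    using profile_powr_cross_le[OF x w(2,3)] by (intro mult_left_mono) auto
  finally have cross_w: "H x 1 powr a * (y powr a - x powr a) \<le> H x y powr a * (1 - x powr a)"
    using Hxy by (simp add: algebra_simps)
  have cross_y: "H x 1 powr a * (1 - y powr a) \<le> H y 1 powr a * (1 - x powr a)"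
    using profile_powr_cross_le[OF x less_imp_le[OF xy] y] .
  have "H x 1 powr a * (1 - x powr a) \<le> (H x y powr a + H y 1 powr a) * (1 - x powr a)"
    using add_mono[OF cross_w cross_y] by (simp add: algebra_simps)
  moreover have "0 < 1 - x powr a"
    using powr_less_mono2[of a x 1] exponent x xy y by simp
  ultimately show ?thesis by simp
qed

lemma triangle_to_one:
  assumes x: "0 \<le> x" "x \<le> 1" and y: "0 \<le> y"
  shows "H x 1 powr a \<le> H x y powr a + H y 1 powr a"
proof -
  consider "y \<le> x" | "1 \<le> y" | "x < y" "y < 1" by linarith
  then show ?thesis
  proof cases
    case 1
    then have "H x 1 powr a \<le> H y 1 powr a"
      using antimono_le_one[of y x] x y exponent nonneg by (intro powr_mono2) auto
    then show ?thesis by (simp add: add_increasing)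
  next
    case 2
    have "H x 1 \<le> H (x / y) 1"
      using 2 x by (intro antimono_le_one) (auto simp: divide_le_eq mult_le_cancel_left1)
    also have "\<dots> \<le> H x y"
      using 2 x homogeneous_one[of y x] nonneg[of "x / y" 1] by (simp add: mult_le_cancel_right1)
    finally have "H x 1 powr a \<le> H x y powr a"
      using exponent nonneg by (intro powr_mono2) auto
    then show ?thesis by (simp add: add_increasing2)
  next
    case 3
    then show ?thesis using triangle_to_one_between x by blast
  qed
qed

lemma triangle_ordered:
  assumes "0 \<le> x" "x \<le> z" "0 \<le> y"
  shows "H x z powr a \<le> H x y powr a + H y z powr a"
proof (cases "z = 0")
  case True
  then show ?thesis using assms diagonal_nonneg nonneg by simp
next
  case False
  then have z: "0 < z" using assms by simp
  have "H x z powr a = z powr a * H (x / z) 1 powr a"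
    using homogeneous_one[OF z] assms nonneg by (simp add: powr_mult)
  also have "\<dots> \<le> z powr a * (H (x / z) (y / z) powr a + H (y / z) 1 powr a)"
    using triangle_to_one[of "x / z" "y / z"] assms z by (intro mult_left_mono) auto
  also have "\<dots> = H x y powr a + H y z powr a"
    using homogeneous[OF z, of "x / z" "y / z"] homogeneous_one[OF z, of y] assms z nonneg
    by (simp add: powr_mult distrib_left)
  finally show ?thesis .
qed

theorem powr_triangle:
  assumes "0 \<le> x" "0 \<le> y" "0 \<le> z"
  shows "H x z powr a \<le> H x y powr a + H y z powr a"
proof (cases "x \<le> z")
  case True
  then show ?thesis using triangle_ordered assms by blast
next
  case False
  then show ?thesis
    using triangle_ordered[of z x y] assms symmetric by (simp add: add.commute)
qed

end

theorem mainTheorem2: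
  fixes G :: "real \<Rightarrow> ennreal" and a :: real
  assumes G: "G \<in> Gamma0"
    and finite: "\<And>x y. x \<ge> 0 \<Longrightarrow> y \<ge> 0 \<Longrightarrow> marg_persp G x y \<noteq> \<infinity>"
    and pos: "\<And>u. 0 \<le> u \<Longrightarrow> u < 1 \<Longrightarrow> marg_persp G u 1 > 0"
    and a: "0 < a" "a \<le> 1"
    and decr: "\<And>u v. 0 \<le> u \<Longrightarrow> u \<le> v \<Longrightarrow> v < 1 \<Longrightarrow>
        (1 - v powr a) powr (1 / a) / enn2real (marg_persp G v 1)
          \<le> (1 - u powr a) powr (1 / a) / enn2real (marg_persp G u 1)"
  shows "\<And>x y z. x \<ge> 0 \<Longrightarrow> y \<ge> 0 \<Longrightarrow> z \<ge> 0 \<Longrightarrow>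
      enn2real (marg_persp G x z) powr a
        \<le> enn2real (marg_persp G x y) powr a + enn2real (marg_persp G y z) powr a"
proof -
  have convex: "convex_on_nonneg G" and G1: "G 1 = 0"
    using G by (auto simp: Gamma0_def)
  interpret homogeneous_profile "\<lambda>x y. enn2real (marg_persp G x y)" a
  proof
    fix c x y u :: real
    show "0 \<le> x \<Longrightarrow> 0 \<le> y \<Longrightarrow> enn2real (marg_persp G x y) = enn2real (marg_persp G y x)"
      by (simp add: marg_persp_commute)
    show "0 < c \<Longrightarrow> 0 \<le> x \<Longrightarrow> 0 \<le> y \<Longrightarrow>
        enn2real (marg_persp G (c * x) (c * y)) = c * enn2real (marg_persp G x y)"
      by (simp add: marg_persp_homogeneous[OF convex G1] enn2real_mult)
    show "0 < x \<Longrightarrow> enn2real (marg_persp G x x) = 0"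
      by (simp add: marg_persp_diagonal[where F = G, OF G1])
    show "0 \<le> y \<Longrightarrow> y \<le> x \<Longrightarrow> x < 1 \<Longrightarrow> enn2real (marg_persp G x 1) \<le> enn2real (marg_persp G y 1)"
      using finite[of y 1] by (intro enn2real_mono marg_persp_antimono[OF convex G1]) (auto simp: less_top)
    show "0 \<le> u \<Longrightarrow> u < 1 \<Longrightarrow> 0 < enn2real (marg_persp G u 1)"
      using pos[of u] finite[of u 1] by (simp add: enn2real_positive_iff less_top)
  qed (use a decr in auto)
  from powr_triangle show "\<And>x y z. x \<ge> 0 \<Longrightarrow> y \<ge> 0 \<Longrightarrow> z \<ge> 0 \<Longrightarrow>
      enn2real (marg_persp G x z) powr a
        \<le> enn2real (marg_persp G x y) powr a + enn2real (marg_persp G y z) powr a" .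
qed

end
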